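(* Let $M=\{x\in\mathbb{R}^k:x_i\ge0,\ \sum_ix_i=1\}$, $M_0=\{x\in M:\prod_ix_i=0\}$, and $M_1=M\setminus M_0$. Let $F:M\to M$ have the form $F_i(x)=x_if_i(x)$ with each $f_i:M\to(0,\infty)$ continuous. Let $p^\varepsilon$, $\varepsilon=1/N$, be the transition kernel of the multinomial process associated with $F$. Set $\rho(x,y)=\sum_{i=1}^ky_i\log\frac{y_i}{F_i(x)}$, with the conventions $0\log0=0$ and $y\log(y/0)=+\infty$ for $y>0$. Then $\rho$ and $p^\varepsilon$ satisfy Hypotheses (LD) and (LD0).
   Context: For $x\in M$ and $N\in\mathbb{N}$, let $Z_1(x),Z_2(x),\dots$ be independent multinomial random vectors with $N$ trials, $k$ outcomes, and probability $x_i$ of outcome $i$. With $\varepsilon=1/N$, the multinomial process associated with $F$ is the Markov chain on $M\cap\varepsilon\mathbb{Z}^k$ given by $X^\varepsilon_{t+1}=\varepsilon Z_{t+1}(F(X^\varepsilon_t))$. Its kernel is $p^\varepsilon(x,\Gamma)=\mathbb{P}[\varepsilon Z_1(F(x))\in\Gamma]$. Let $d(x,y)=\max_i|x_i-y_i|$. Hypothesis (LD). There is $\rho:M\times M\to[0,+\infty]$ such that: (i) $\rho$ is continuous on $M_1\times M$; (ii) $\rho(x,y)=0$ iff $y=F(x)$; (iii) for every $\beta>0$, $\inf\{\rho(x,y):x,y\in M,\ d(F(x),y)>\beta\}>0$; (iv) lower bound: for every compact $K\subset M_1$, every open ball $U$ of $M$ and every $\eta>0$, there is $\varepsilon_0>0$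 such that $\varepsilon\log p^\varepsilon(x,U)\ge-\inf_{y\in U}\rho(x,y)-\eta$ for all $x\in K$ and $\varepsilon<\varepsilon_0$; (v) upper bound: for every closed $C\subset M$ and every $\eta>0$, there is $\varepsilon_0>0$ such that $\varepsilon\log p^\varepsilon(x,C)\le-\inf_{y\in C}\rho(x,y)+\eta$ for all $x\in M$ and $\varepsilon<\varepsilon_0$. Hypothesis (LD0). For every $c>0$ there is an open neighborhood $V_0$ of $M_0$ with $\liminf_{\varepsilon\to0}\inf_{x\in V_0}\varepsilon\log p^\varepsilon(x,M_0)\ge-c$. *)

theory Defs
  imports "HOL-Analysis.Analysis"
begin

text \<open>The simplex M, its boundary M0 and its interior M1, for vectors in R^k
  (the index type 'k is an arbitrary finite type, k = CARD('k)).\<close>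

definition simplexM :: "(real^'k::finite) set" where
  "simplexM = {x. (\<forall>i. 0 \<le> x$i) \<and> (\<Sum>i\<in>UNIV. x$i) = 1}"

definition simplexM0 :: "(real^'k::finite) set" where
  "simplexM0 = {x \<in> simplexM. (\<Prod>i\<in>UNIV. x$i) = 0}"

definition simplexM1 :: "(real^'k::finite) set" where
  "simplexM1 = simplexM - simplexM0"

definition dmax :: "real^'k::finite \<Rightarrow> real^'k \<Rightarrow> real" where
  "dmax x y = Max (range (\<lambda>i. \<bar>x$i - y$i\<bar>))"

definition is_open_ballM :: "(real^'k::finite) set \<Rightarrow> bool" where
  "is_open_ballM U \<longleftrightarrow> (\<exists>c r. c \<in> simplexM \<and> 0 < r \<and> U = {y \<in> simplexM. dmax c y < r})"

text \<open>Transition kernel of the multinomial process associated with F, with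
  N trials and epsilon = 1/N:
  p(x,Gamma) = P[ (1/N) Z(F x) \<in> Gamma ], Z(F x) multinomial(N; F x).\<close>

definition mn_kernel ::
  "(real^'k::finite \<Rightarrow> real^'k) \<Rightarrow> nat \<Rightarrow> real^'k \<Rightarrow> (real^'k) set \<Rightarrow> real" where
  "mn_kernel F N x \<Gamma> =
     (\<Sum>n\<in>{n::'k \<Rightarrow> nat. sum n UNIV = N \<and> (\<chi> i. real (n i) / real N) \<in> \<Gamma>}.
        fact N / (\<Prod>i\<in>UNIV. fact (n i)) * (\<Prod>i\<in>UNIV. (F x $ i) ^ n i))"

definition elog :: "real \<Rightarrow> ereal" where
  "elog p = (if p \<le> 0 then -\<infinity> else ereal (ln p))"

definition rel_ent_term :: "real \<Rightarrow> real \<Rightarrow> ereal" where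
  "rel_ent_term y z = (if y = 0 then 0 else if z = 0 then \<infinity> else ereal (y * ln (y / z)))"

definition rhoF :: "(real^'k::finite \<Rightarrow> real^'k) \<Rightarrow> real^'k \<Rightarrow> real^'k \<Rightarrow> ereal" where
  "rhoF F x y = (\<Sum>i\<in>UNIV. rel_ent_term (y$i) (F x $ i))"

text \<open>Hypothesis (LD) for a rate function rho and kernel p (p N = p^epsilon, epsilon = 1/N).\<close>

definition hyp_LD ::
  "(real^'k::finite \<Rightarrow> real^'k) \<Rightarrow> (real^'k \<Rightarrow> real^'k \<Rightarrow> ereal)
     \<Rightarrow> (nat \<Rightarrow> real^'k \<Rightarrow> (real^'k) set \<Rightarrow> real) \<Rightarrow> bool" where
  "hyp_LD F \<rho> p \<longleftrightarrow>
     (\<forall>x\<in>simplexM. \<forall>y\<in>simplexM. \<rho> x y \<ge> 0)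
   \<and> continuous_on (simplexM1 \<times> simplexM) (\<lambda>(x,y). \<rho> x y)
   \<and> (\<forall>x\<in>simplexM. \<forall>y\<in>simplexM. \<rho> x y = 0 \<longleftrightarrow> y = F x)
   \<and> (\<forall>\<beta>>0. Inf {\<rho> x y | x y. x \<in> simplexM \<and> y \<in> simplexM \<and> dmax (F x) y > \<beta>} > 0)
   \<and> (\<forall>K U \<eta>. compact K \<and> K \<subseteq> simplexM1 \<and> is_open_ballM U \<and> \<eta> > 0 \<longrightarrow>
        (\<exists>\<epsilon>0>0. \<forall>N. N > 0 \<and> 1 / real N < \<epsilon>0 \<longrightarrow>
           (\<forall>x\<in>K. ereal (1 / real N) * elog (p N x U)
                     \<ge> - (INF y\<in>U. \<rho> x y) - ereal \<eta>)))
   \<and> (\<forall>C \<eta>. closed C \<and> C \<subseteq> simplexM \<and> \<eta> > 0 \<longrightarrow>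
        (\<exists>\<epsilon>0>0. \<forall>N. N > 0 \<and> 1 / real N < \<epsilon>0 \<longrightarrow>
           (\<forall>x\<in>simplexM. ereal (1 / real N) * elog (p N x C)
                     \<le> - (INF y\<in>C. \<rho> x y) + ereal \<eta>)))"

definition hyp_LD0 :: "(nat \<Rightarrow> real^'k::finite \<Rightarrow> (real^'k) set \<Rightarrow> real) \<Rightarrow> bool" where
  "hyp_LD0 p \<longleftrightarrow>
     (\<forall>c>0. \<exists>V0. open V0 \<and> simplexM0 \<subseteq> V0 \<and>
        liminf (\<lambda>N. INF x\<in>V0 \<inter> simplexM. ereal (1 / real N) * elog (p N x simplexM0))
          \<ge> - ereal c)"

end

theory Submission
  imports Defs "HOL-Real_Asymp.Real_Asymp"
begin

text \<open>
  Everything rests on a two-sided estimate of a single multinomial weight: for a lattice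
  point q = n/N of the simplex (a "type") and a probability vector p,
      exp(-N H(q|p)) / (e^2 (N+1))^k  <=  P[Z(p) = n]  <=  e^2 (N+1) exp(-N H(q|p)),
  which follows from the Stirling-type bounds m^m <= m! e^m <= e^2 (m+1) m^m.  Since there
  are at most (N+1)^k types, summing gives the upper bound (v) uniformly in x, while one
  good type gives a lower bound: for (iv) points of the ball U are rounded to nearby types
  and uniform continuity of H(y | F x) on K x M controls the error; for (LD0) F x, which
  has a small coordinate, is rounded to a type on the boundary.  Properties (i)-(iii)
  follow from continuity of t ln t and the bound H(y|p) >= |y - p|^2 / 2.
  The file proceeds: factorial bounds, multinomial coefficients, the simplex and d,
  relative entropy, types and rounding, bounds on the multinomial law, continuity of rho,
  the bounds (iv), (v), (LD0), and the main theorem.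
\<close>


section \<open>Stirling-type bounds for the factorial\<close>

text \<open>A single Taylor term of the exponential series bounds it from below.\<close>

lemma pow_div_fact_le_exp:
  fixes x :: real
  assumes "0 \<le> x"
  shows "x ^ n / fact n \<le> exp x"
proof -
  have series: "(\<lambda>m. x ^ m / fact m) sums exp x"
    using exp_converges[of x] by (simp add: divide_inverse mult.commute scaleR_conv_of_real)
  have "(\<Sum>m\<in>{n}. x ^ m / fact m) \<le> (\<Sum>m. x ^ m / fact m)"
    using series assms by (intro sum_le_suminf) (auto simp: sums_iff)
  thus ?thesis using series by (simp add: sums_iff)
qed

lemma pow_self_le_fact_exp: "real n ^ n \<le> fact n * exp (real n)"
  using pow_div_fact_le_exp[of "real n" n] by (simp add: field_simps)

text \<open>(1 + 1/n)^n <= e, written without division.\<close>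

lemma Suc_pow_le_exp_pow: "(real n + 1) ^ n \<le> exp 1 * real n ^ n"
proof (cases "n = 0")
  case True then show ?thesis by simp
next
  case False
  hence n: "real n > 0" by simp
  have "(real n + 1) ^ n = real n ^ n * (1 + 1/real n) ^ n"
    using n by (simp add: power_mult_distrib[symmetric] field_simps)
  also have "(1 + 1/real n) ^ n = exp (real n * ln (1 + 1/real n))"
    using n by (simp add: exp_of_nat_mult add_pos_pos)
  also have "\<dots> \<le> exp 1"
  proof -
    have "ln (1 + 1/real n) \<le> 1/real n" by (rule ln_add_one_self_le_self) simp
    hence "real n * ln (1 + 1/real n) \<le> 1" using n by (simp add: field_simps)
    thus ?thesis by simp
  qed
  finally show ?thesis using n by (simp add: mult_left_mono mult.commute)
qed

text \<open>e <= (1 + 1/m)^(m+1), written without division.\<close>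

lemma exp_pow_le_Suc_pow:
  assumes "m \<ge> 1"
  shows "exp 1 * real m ^ (m+1) \<le> (real m + 1) ^ (m+1)"
proof -
  have m: "real m > 0" using assms by simp
  have "ln (real m / (real m + 1)) \<le> real m / (real m + 1) - 1"
    using m by (intro ln_le_minus_one) simp
  moreover have "ln (real m / (real m + 1)) = - ln (1 + 1/real m)"
    using m by (simp add: ln_div field_simps)
  ultimately have "1 \<le> (real m + 1) * ln (1 + 1/real m)" using m by (simp add: field_simps)
  hence "exp 1 \<le> exp (real (m+1) * ln (1 + 1/real m))" by (simp add: algebra_simps)
  also have "\<dots> = (1 + 1/real m) ^ (m+1)"
    using m by (simp add: exp_of_nat_mult add_pos_pos del: of_nat_Suc)
  finally have "exp 1 * real m ^ (m+1) \<le> (1 + 1/real m) ^ (m+1) * real m ^ (m+1)"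
    using m by (intro mult_right_mono) auto
  also have "\<dots> = (real m + 1) ^ (m+1)"
    using m by (simp add: power_mult_distrib[symmetric] field_simps)
  finally show ?thesis .
qed

lemma fact_exp_le_Suc_pow: "fact n * exp (real n) \<le> exp 1 * (real n + 1) ^ (n+1)"
proof (induction n)
  case 0 then show ?case by simp
next
  case (Suc n)
  have "fact (Suc n) * exp (real (Suc n)) = (real n + 1) * exp 1 * (fact n * exp (real n))"
    by (simp add: exp_add algebra_simps)
  also have "\<dots> \<le> (real n + 1) * exp 1 * (exp 1 * (real n + 1) ^ (n+1))"
    using Suc by (intro mult_left_mono) auto
  also have "\<dots> = exp 1 * (exp 1 * real (Suc n) ^ (Suc n + 1))" by (simp add: add_ac)
  also have "\<dots> \<le> exp 1 * (real (Suc n) + 1) ^ (Suc n + 1)"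
    using exp_pow_le_Suc_pow[of "Suc n"] by (intro mult_left_mono) auto
  finally show ?case by simp
qed

lemma fact_exp_le_pow_self: "fact m * exp (real m) \<le> exp 2 * (real m + 1) * real m ^ m"
proof -
  have "fact m * exp (real m) \<le> exp 1 * (real m + 1) * (real m + 1) ^ m"
    using fact_exp_le_Suc_pow[of m] by simp
  also have "\<dots> \<le> exp 1 * (real m + 1) * (exp 1 * real m ^ m)"
    by (intro mult_left_mono Suc_pow_le_exp_pow) auto
  also have "\<dots> = exp 2 * (real m + 1) * real m ^ m"
    by (simp add: exp_add[symmetric] mult_ac)
  finally show ?thesis .
qed


section \<open>Multinomial coefficients\<close>

text \<open>With 0^0 = 1, the product of the n_i^(n_i) is positive.\<close>

lemma prod_pow_self_pos: "(\<Prod>i\<in>UNIV. real (n i) ^ n i) > 0"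
proof -
  have "real (n i) ^ n i > 0" for i by (cases "n i = 0") auto
  thus ?thesis by (intro prod_pos) auto
qed

lemma multinomial_coeff_bounds:
  fixes n :: "'i::finite \<Rightarrow> nat"
  assumes sN: "sum n UNIV = N"
  defines "A \<equiv> (\<Prod>i\<in>UNIV. fact (n i) :: real)" and "B \<equiv> (\<Prod>i\<in>UNIV. real (n i) ^ n i)"
  shows "fact N / A \<le> exp 2 * (real N + 1) * (real N ^ N / B)"
    and "real N ^ N / B / (exp 2 * (real N + 1)) ^ CARD('i) \<le> fact N / A"
proof -
  have A: "A > 0" unfolding A_def by (intro prod_pos) auto
  have B: "B > 0" unfolding B_def by (rule prod_pow_self_pos)
  have fact_exp: "A * exp (real N) = (\<Prod>i\<in>UNIV. fact (n i) * exp (real (n i)))"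
    unfolding A_def prod.distrib using sN by (simp add: exp_sum[symmetric] of_nat_sum[symmetric])
  have "B \<le> (\<Prod>i\<in>UNIV. fact (n i) * exp (real (n i)))"
    unfolding B_def by (intro prod_mono) (auto simp: pow_self_le_fact_exp)
  hence "fact N * B \<le> A * (fact N * exp (real N))" using fact_exp by (simp add: mult_ac)
  also have "\<dots> \<le> A * (exp 2 * (real N + 1) * real N ^ N)"
    using A by (intro mult_left_mono fact_exp_le_pow_self) auto
  finally show "fact N / A \<le> exp 2 * (real N + 1) * (real N ^ N / B)"
    using A B by (simp add: field_simps)
  have "A * exp (real N) \<le> (\<Prod>i\<in>UNIV. exp 2 * (real (n i) + 1) * real (n i) ^ n i)"
    unfolding fact_exp by (intro prod_mono) (auto simp: fact_exp_le_pow_self)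
  also have "\<dots> = (\<Prod>i\<in>UNIV. exp 2 * (real (n i) + 1)) * B"
    unfolding B_def prod.distrib by simp
  also have "\<dots> \<le> (exp 2 * (real N + 1)) ^ CARD('i) * B"
  proof -
    have "n i \<le> N" for i using sN member_le_sum[of i UNIV n] by auto
    hence "(\<Prod>i\<in>UNIV. exp 2 * (real (n i) + 1)) \<le> (\<Prod>i\<in>(UNIV::'i set). exp 2 * (real N + 1))"
      by (intro prod_mono) auto
    thus ?thesis using B by (intro mult_right_mono) auto
  qed
  finally have AB: "A * exp (real N) \<le> (exp 2 * (real N + 1)) ^ CARD('i) * B" .
  have "real N ^ N * A \<le> fact N * exp (real N) * A"
    using A by (intro mult_right_mono pow_self_le_fact_exp) auto
  also have "\<dots> = fact N * (A * exp (real N))" by (simp add: mult_ac)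
  also have "\<dots> \<le> fact N * ((exp 2 * (real N + 1)) ^ CARD('i) * B)"
    using AB by (intro mult_left_mono) auto
  finally have "real N ^ N * A \<le> fact N * ((exp 2 * (real N + 1)) ^ CARD('i) * B)" .
  moreover have "(exp 2 * (real N + 1)) ^ CARD('i) > 0" by simp
  ultimately show "real N ^ N / B / (exp 2 * (real N + 1)) ^ CARD('i) \<le> fact N / A"
    using A B by (simp add: field_simps)
qed


section \<open>The simplex and the metric d\<close>

lemma simplex_nonneg: "x \<in> simplexM \<Longrightarrow> 0 \<le> x$i"
  by (simp add: simplexM_def)

lemma simplex_le_1:
  assumes "x \<in> simplexM" shows "x$i \<le> 1"
proof -
  have "x$i \<le> (\<Sum>j\<in>UNIV. x$j)"
    using assms by (intro member_le_sum) (auto simp: simplexM_def)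
  thus ?thesis using assms by (simp add: simplexM_def)
qed

lemma simplexM1_pos:
  assumes "x \<in> simplexM1" shows "x$i > 0"
proof -
  have "(\<Prod>i\<in>UNIV. x$i) \<noteq> 0" using assms by (simp add: simplexM1_def simplexM0_def)
  hence "x$i \<noteq> 0" by auto
  thus ?thesis using assms by (simp add: simplexM1_def simplexM_def less_le)
qed

lemma compact_simplexM: "compact (simplexM :: (real^'k::finite) set)"
proof -
  have eq: "(simplexM :: (real^'k) set) = (\<Inter>i. {x. 0 \<le> x$i}) \<inter> {x. (\<Sum>i\<in>UNIV. x$i) = 1}"
    by (auto simp: simplexM_def)
  have "closed (simplexM :: (real^'k) set)" unfolding eq
    by (intro closed_Int closed_INT ballI closed_Collect_le closed_Collect_eq continuous_intros)
  moreover have "bounded (simplexM :: (real^'k) set)"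
  proof (rule boundedI)
    fix x :: "real^'k" assume x: "x \<in> simplexM"
    have "norm x \<le> (\<Sum>i\<in>UNIV. \<bar>x$i\<bar>)" by (rule norm_le_l1_cart)
    also have "\<dots> = (\<Sum>i\<in>UNIV. x$i)" using x by (intro sum.cong) (auto simp: simplexM_def)
    also have "\<dots> = 1" using x by (simp add: simplexM_def)
    finally show "norm x \<le> 1" .
  qed
  ultimately show ?thesis by (simp add: compact_eq_bounded_closed)
qed

lemma convex_comb_simplexM:
  assumes "y \<in> simplexM" "c \<in> simplexM" "0 \<le> t" "t \<le> 1"
  shows "(1 - t) *\<^sub>R y + t *\<^sub>R c \<in> simplexM"
proof -
  have "(\<Sum>i\<in>UNIV. (1 - t) * y$i + t * c$i) = (1 - t) * (\<Sum>i\<in>UNIV. y$i) + t * (\<Sum>i\<in>UNIV. c$i)"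
    by (simp add: sum.distrib sum_distrib_left)
  thus ?thesis using assms by (auto simp: simplexM_def)
qed

lemma dmax_attained: "\<exists>j. dmax x y = \<bar>x$j - y$j\<bar>"
proof -
  have "dmax x y \<in> range (\<lambda>i. \<bar>x$i - y$i\<bar>)" unfolding dmax_def by (intro Max_in) auto
  thus ?thesis by auto
qed

lemma dmax_ge: "\<bar>x$j - y$j\<bar> \<le> dmax x y"
  unfolding dmax_def by (intro Max_ge) auto

lemma dmax_le: "(\<And>i. \<bar>x$i - y$i\<bar> \<le> b) \<Longrightarrow> dmax x y \<le> b"
  using dmax_attained[of x y] by metis

lemma dmax_comm: "dmax x y = dmax y x"
  unfolding dmax_def by (simp add: abs_minus_commute)

lemma dmax_self: "dmax x x = 0"
  by (simp add: dmax_def)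

lemma dmax_triangle: "dmax x z \<le> dmax x y + dmax y z"
proof (rule dmax_le)
  fix i
  have "\<bar>x$i - z$i\<bar> \<le> \<bar>x$i - y$i\<bar> + \<bar>y$i - z$i\<bar>" by linarith
  thus "\<bar>x$i - z$i\<bar> \<le> dmax x y + dmax y z" using dmax_ge[of x i y] dmax_ge[of y i z] by linarith
qed

lemma dmax_simplexM_le_1:
  assumes "x \<in> simplexM" "y \<in> simplexM" shows "dmax x y \<le> 1"
proof (rule dmax_le)
  fix i show "\<bar>x$i - y$i\<bar> \<le> 1"
    using simplex_nonneg[OF assms(1), of i] simplex_le_1[OF assms(1), of i]
      simplex_nonneg[OF assms(2), of i] simplex_le_1[OF assms(2), of i] by linarith
qed

lemma norm_le_card_dmax: "norm (x - y) \<le> real CARD('k) * dmax x (y::real^'k::finite)"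
proof -
  have "norm (x - y) \<le> (\<Sum>i\<in>UNIV. \<bar>(x - y)$i\<bar>)" by (rule norm_le_l1_cart)
  also have "\<dots> \<le> (\<Sum>i\<in>(UNIV::'k set). dmax x y)" by (intro sum_mono) (simp add: dmax_ge)
  also have "\<dots> = real CARD('k) * dmax x y" by simp
  finally show ?thesis .
qed

lemma dmax_convex_comb:
  assumes "0 \<le> t" "t \<le> 1"
  shows "dmax c ((1 - t) *\<^sub>R y + t *\<^sub>R c) \<le> (1 - t) * dmax c y"
proof (rule dmax_le)
  fix i
  have "c$i - ((1 - t) *\<^sub>R y + t *\<^sub>R c)$i = (1 - t) * (c$i - y$i)"
    by (simp add: algebra_simps)
  hence "\<bar>c$i - ((1 - t) *\<^sub>R y + t *\<^sub>R c)$i\<bar> = (1 - t) * \<bar>c$i - y$i\<bar>"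
    using assms by (simp add: abs_mult)
  also have "\<dots> \<le> (1 - t) * dmax c y" using assms by (intro mult_left_mono dmax_ge) auto
  finally show "\<bar>c$i - ((1 - t) *\<^sub>R y + t *\<^sub>R c)$i\<bar> \<le> (1 - t) * dmax c y" .
qed


section \<open>Relative entropy\<close>

text \<open>The real-valued summand y ln(y/z) with 0 ln 0 = 0; it agrees with rel_ent_term whenever
  z > 0 or y = 0.\<close>

definition xlog_ratio :: "real \<Rightarrow> real \<Rightarrow> real" where
  "xlog_ratio y z = (if y = 0 then 0 else y * ln (y / z))"

text \<open>Relative entropy H(y | p); the rate function is rhoF F x y = H(y | F x).\<close>

definition rel_entropy :: "real^'k::finite \<Rightarrow> real^'k \<Rightarrow> ereal" where
  "rel_entropy p y = (\<Sum>i\<in>UNIV. rel_ent_term (y$i) (p$i))"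

definition rel_entropy_real :: "real^'k::finite \<Rightarrow> real^'k \<Rightarrow> real" where
  "rel_entropy_real p y = (\<Sum>i\<in>UNIV. xlog_ratio (y$i) (p$i))"

lemma rhoF_rel_entropy: "rhoF F x y = rel_entropy (F x) y"
  unfolding rhoF_def rel_entropy_def by simp

lemma rel_entropy_finite:
  assumes "\<And>i. y$i \<noteq> 0 \<Longrightarrow> p$i \<noteq> 0"
  shows "rel_entropy p y = ereal (rel_entropy_real p y)"
proof -
  have "rel_ent_term (y$i) (p$i) = ereal (xlog_ratio (y$i) (p$i))" for i
    using assms unfolding rel_ent_term_def xlog_ratio_def by auto
  thus ?thesis unfolding rel_entropy_def rel_entropy_real_def by simp
qed

lemma rel_entropy_infinite:
  assumes "y$i \<noteq> 0" "p$i = 0"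
  shows "rel_entropy p y = \<infinity>"
  unfolding rel_entropy_def sum_Pinfty using assms by (auto simp: rel_ent_term_def)

lemma xlog_ratio_nonpos: "0 \<le> y \<Longrightarrow> y \<le> z \<Longrightarrow> xlog_ratio y z \<le> 0"
  by (cases "y = 0") (auto simp: xlog_ratio_def mult_nonneg_nonpos)

lemma xlog_ratio_le:
  assumes "0 < y" "0 < z" shows "xlog_ratio y z \<le> y * (y - z) / z"
proof -
  have "ln (y / z) \<le> y / z - 1" using assms by (intro ln_le_minus_one) auto
  hence "y * ln (y / z) \<le> y * (y / z - 1)" using assms by (intro mult_left_mono) auto
  also have "\<dots> = y * (y - z) / z" using assms by (simp add: field_simps)
  finally show ?thesis using assms by (simp add: xlog_ratio_def)
qed

text \<open>Pointwise quadratic bound y ln(y/z) >= (y - z) + (y - z)^2/2 on (0,1]: the function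
  t ln(t/z) - t + z - (t - z)^2/2 vanishes at z and is monotone on both sides of z.\<close>

lemma xlnx_ratio_quadratic_bound:
  fixes y z :: real
  assumes y: "0 < y" "y \<le> 1" and z: "0 < z" "z \<le> 1"
  shows "y - z + (y - z)^2 / 2 \<le> y * ln (y / z)"
proof -
  define g :: "real \<Rightarrow> real" where "g t = t * ln (t / z) - t + z - (t - z)^2 / 2" for t
  have der: "DERIV g t :> ln (t / z) - (t - z)" if "t > 0" for t
    unfolding g_def using that z
    by (auto intro!: derivative_eq_intros simp: field_simps power2_eq_square)
  have "g z \<le> g y"
  proof (cases "z \<le> y")
    case True
    show ?thesis
    proof (rule DERIV_nonneg_imp_nondecreasing[OF True])
      fix t assume t: "z \<le> t" "t \<le> y"
      have "ln (z / t) \<le> z / t - 1" using t z by (intro ln_le_minus_one) auto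
      moreover have "ln (z / t) = - ln (t / z)" using t z by (simp add: ln_div)
      ultimately have "ln (t / z) \<ge> (t - z) / t" using t z by (simp add: field_simps)
      moreover have "(t - z) / t \<ge> t - z"
        using t y z mult_left_mono[of t 1 "t - z"] by (simp add: field_simps)
      ultimately show "\<exists>d. DERIV g t :> d \<and> d \<ge> 0"
        using der[of t] t z by (intro exI[of _ "ln (t / z) - (t - z)"]) auto
    qed
  next
    case False
    show ?thesis
    proof (rule DERIV_nonpos_imp_nonincreasing[of y z])
      show "y \<le> z" using False by simp
      fix t assume t: "y \<le> t" "t \<le> z"
      have "ln (t / z) \<le> t / z - 1" using t y z by (intro ln_le_minus_one) auto
      moreover have "t / z - 1 \<le> t - z"
        using t y z mult_left_mono_neg[of z 1 "t - z"] by (simp add: field_simps)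
      ultimately show "\<exists>d. DERIV g t :> d \<and> d \<le> 0"
        using der[of t] t y z by (intro exI[of _ "ln (t / z) - (t - z)"]) auto
    qed
  qed
  thus ?thesis using z unfolding g_def by simp
qed

lemma rel_ent_term_quadratic_bound:
  fixes y z :: real
  assumes y: "0 \<le> y" "y \<le> 1" and z: "0 \<le> z" "z \<le> 1"
  shows "ereal (y - z + (y - z)^2 / 2) \<le> rel_ent_term y z"
proof -
  consider "y = 0" | "y > 0" "z = 0" | "y > 0" "z > 0" using y z by linarith
  thus ?thesis
  proof cases
    case 1
    have "z * z \<le> z" using z by (simp add: mult_left_le)
    hence "z^2/2 \<le> z" using z by (simp add: power2_eq_square)
    thus ?thesis using 1 by (simp add: rel_ent_term_def)
  next
    case 2 thus ?thesis by (simp add: rel_ent_term_def)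
  next
    case 3 thus ?thesis using xlnx_ratio_quadratic_bound[of y z] y z by (simp add: rel_ent_term_def)
  qed
qed

text \<open>Summing over coordinates, the linear terms cancel on the simplex:
  H(y|p) >= |y - p|^2 / 2.  This yields nonnegativity, the zero set and separation.\<close>

lemma rel_entropy_quadratic_bound:
  assumes p: "p \<in> simplexM" and y: "y \<in> simplexM"
  shows "ereal ((\<Sum>i\<in>UNIV. (y$i - p$i)^2) / 2) \<le> rel_entropy p y"
proof -
  have "(\<Sum>i\<in>UNIV. ereal (y$i - p$i + (y$i - p$i)^2/2)) \<le> rel_entropy p y"
    unfolding rel_entropy_def using assms
    by (intro sum_mono rel_ent_term_quadratic_bound simplex_nonneg simplex_le_1)
  moreover have "(\<Sum>i\<in>UNIV. y$i - p$i + (y$i - p$i)^2/2) = (\<Sum>i\<in>UNIV. (y$i - p$i)^2) / 2"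
    using p y by (simp add: sum.distrib sum_subtractf sum_divide_distrib simplexM_def)
  ultimately show ?thesis by simp
qed

lemma rel_entropy_nonneg:
  assumes "p \<in> simplexM" "y \<in> simplexM" shows "rel_entropy p y \<ge> 0"
proof -
  have "(0::ereal) \<le> ereal ((\<Sum>i\<in>UNIV. (y$i - p$i)^2) / 2)"
    by (simp add: sum_nonneg)
  thus ?thesis using rel_entropy_quadratic_bound[OF assms] by (rule order_trans)
qed

lemma rel_entropy_eq_0_iff:
  assumes "p \<in> simplexM" "y \<in> simplexM" shows "rel_entropy p y = 0 \<longleftrightarrow> y = p"
proof
  assume "rel_entropy p y = 0"
  hence "(\<Sum>i\<in>UNIV. (y$i - p$i)^2) / 2 \<le> 0"
    using rel_entropy_quadratic_bound[OF assms] by (simp add: zero_ereal_def)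
  hence "(\<Sum>i\<in>UNIV. (y$i - p$i)^2) = 0"
    using sum_nonneg[of UNIV "\<lambda>i. (y$i - p$i)^2"] by simp
  hence "\<forall>i\<in>UNIV. (y$i - p$i)^2 = 0" by (subst (asm) sum_nonneg_eq_0_iff) auto
  thus "y = p" by (simp add: vec_eq_iff)
next
  assume "y = p"
  thus "rel_entropy p y = 0"
    unfolding rel_entropy_def rel_ent_term_def by (intro sum.neutral) (simp add: zero_ereal_def)
qed

lemma rel_entropy_dmax_bound:
  assumes "p \<in> simplexM" "y \<in> simplexM" "\<beta> < dmax p y" "\<beta> > 0"
  shows "ereal (\<beta>^2 / 2) \<le> rel_entropy p y"
proof -
  obtain j where j: "dmax p y = \<bar>p$j - y$j\<bar>" using dmax_attained by blast
  have "\<beta>^2 \<le> \<bar>y$j - p$j\<bar>^2"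
    using assms j by (intro power_mono) (auto simp: abs_minus_commute)
  also have "\<dots> = (y$j - p$j)^2" by simp
  also have "\<dots> \<le> (\<Sum>i\<in>UNIV. (y$i - p$i)^2)" by (intro member_le_sum) auto
  finally have "ereal (\<beta>^2/2) \<le> ereal ((\<Sum>i\<in>UNIV. (y$i - p$i)^2) / 2)" by simp
  thus ?thesis using rel_entropy_quadratic_bound[OF assms(1,2)] by (rule order_trans)
qed


section \<open>Types and multinomial weights\<close>

definition types :: "nat \<Rightarrow> ('k::finite \<Rightarrow> nat) set" where
  "types N = {n. sum n UNIV = N}"

definition type_point :: "nat \<Rightarrow> ('k::finite \<Rightarrow> nat) \<Rightarrow> real^'k" where
  "type_point N n = (\<chi> i. real (n i) / real N)"

definition mn_weight :: "real^'k::finite \<Rightarrow> nat \<Rightarrow> ('k \<Rightarrow> nat) \<Rightarrow> real" where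
  "mn_weight p N n = fact N / (\<Prod>i\<in>UNIV. fact (n i)) * (\<Prod>i\<in>UNIV. (p$i) ^ n i)"

definition mn_prob :: "real^'k::finite \<Rightarrow> nat \<Rightarrow> (real^'k) set \<Rightarrow> real" where
  "mn_prob p N \<Gamma> = (\<Sum>n\<in>{n \<in> types N. type_point N n \<in> \<Gamma>}. mn_weight p N n)"

lemma mn_kernel_eq_mn_prob: "mn_kernel F N x \<Gamma> = mn_prob (F x) N \<Gamma>"
  unfolding mn_kernel_def mn_prob_def mn_weight_def type_point_def types_def by simp

lemma type_point_nth: "type_point N n $ i = real (n i) / real N"
  unfolding type_point_def by simp

lemma type_point_in_simplexM:
  assumes "n \<in> types N" "N > 0" shows "type_point N n \<in> simplexM"
  using assms by (simp add: simplexM_def types_def type_point_nth sum_divide_distrib[symmetric]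
      of_nat_sum[symmetric])

lemma types_subset_PiE: "types N \<subseteq> Pi\<^sub>E (UNIV::'k::finite set) (\<lambda>_. {..N})"
proof
  fix n :: "'k \<Rightarrow> nat" assume "n \<in> types N"
  hence "n i \<le> N" for i using member_le_sum[of i UNIV n] by (auto simp: types_def)
  thus "n \<in> Pi\<^sub>E UNIV (\<lambda>_. {..N})" by auto
qed

lemma finite_types_subset: "finite {n \<in> types N. P (n::'k::finite \<Rightarrow> nat)}"
proof -
  have fin: "finite (Pi\<^sub>E (UNIV::'k set) (\<lambda>_. {..N}))" by (rule finite_PiE) auto
  show ?thesis by (rule finite_subset[OF _ fin]) (use types_subset_PiE in auto)
qed

lemma card_types_subset: "card {n \<in> types N. P (n::'k::finite \<Rightarrow> nat)} \<le> (N+1) ^ CARD('k)"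
proof -
  have "card {n \<in> types N. P n} \<le> card (Pi\<^sub>E (UNIV::'k set) (\<lambda>_. {..N}))"
    by (intro card_mono finite_PiE) (use types_subset_PiE[of N] in auto)
  also have "\<dots> = (N+1) ^ CARD('k)" by (simp add: card_PiE)
  finally show ?thesis .
qed

lemma mn_weight_nonneg: "(\<And>i. p$i \<ge> 0) \<Longrightarrow> mn_weight p N n \<ge> 0"
  unfolding mn_weight_def by (intro mult_nonneg_nonneg divide_nonneg_pos prod_nonneg prod_pos) auto

lemma likelihood_ratio_eq_exp:
  assumes N: "N > 0" and n: "n \<in> types N" and pos: "\<And>i. n i > 0 \<Longrightarrow> p$i > 0"
  shows "real N ^ N * (\<Prod>i\<in>UNIV. (p$i) ^ n i) / (\<Prod>i\<in>UNIV. real (n i) ^ n i)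
         = exp (- real N * rel_entropy_real p (type_point N n))"
proof -
  have each: "exp (- real N * xlog_ratio (real (n i) / real N) (p$i)) = (real N * p$i / real (n i)) ^ n i"
    for i
  proof (cases "n i = 0")
    case True then show ?thesis by (simp add: xlog_ratio_def)
  next
    case False
    hence ni: "real (n i) > 0" and pi: "p$i > 0" using pos by auto
    have "- real N * xlog_ratio (real (n i) / real N) (p$i) = real (n i) * ln (real N * p$i / real (n i))"
      using ni pi N by (simp add: xlog_ratio_def ln_div ln_mult field_simps)
    hence "exp (- real N * xlog_ratio (real (n i) / real N) (p$i))
           = exp (ln (real N * p$i / real (n i))) ^ n i"
      by (simp add: exp_of_nat_mult)
    also have "\<dots> = (real N * p$i / real (n i)) ^ n i" using ni pi N by simp
    finally show ?thesis .
  qed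
  have "exp (- real N * rel_entropy_real p (type_point N n))
        = (\<Prod>i\<in>UNIV. exp (- real N * xlog_ratio (real (n i) / real N) (p$i)))"
    by (simp add: rel_entropy_real_def type_point_nth sum_distrib_left exp_sum)
  also have "\<dots> = (\<Prod>i\<in>UNIV. real N ^ n i) * (\<Prod>i\<in>UNIV. (p$i) ^ n i) / (\<Prod>i\<in>UNIV. real (n i) ^ n i)"
    unfolding each by (simp add: power_divide power_mult_distrib prod.distrib prod_dividef)
  also have "(\<Prod>i\<in>UNIV. real N ^ n i) = real N ^ N"
    using n power_sum[of "real N" n UNIV] by (simp add: types_def)
  finally show ?thesis by simp
qed

lemma mn_weight_bounds:
  fixes p :: "real^'k::finite"
  assumes p: "p \<in> simplexM" and N: "N > 0" and n: "n \<in> types N"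
    and r: "rel_entropy p (type_point N n) = ereal r"
  shows "mn_weight p N n \<le> exp 2 * (real N + 1) * exp (- real N * r)"
    and "exp (- real N * r) / (exp 2 * (real N + 1)) ^ CARD('k) \<le> mn_weight p N n"
proof -
  have p0: "p$i \<ge> 0" for i using p by (rule simplex_nonneg)
  have pos: "p$i > 0" if "n i > 0" for i
  proof (rule ccontr)
    assume "\<not> p$i > 0" hence "p$i = 0" using p0[of i] by simp
    hence "rel_entropy p (type_point N n) = \<infinity>"
      using that N by (intro rel_entropy_infinite[of _ i]) (auto simp: type_point_nth)
    thus False using r by simp
  qed
  define P where "P = (\<Prod>i\<in>UNIV. (p$i) ^ n i)"
  define ratio where "ratio = real N ^ N / (\<Prod>i\<in>UNIV. real (n i) ^ n i)"
  define coeff where "coeff = fact N / (\<Prod>i\<in>UNIV. fact (n i) :: real)"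
  have "rel_entropy p (type_point N n) = ereal (rel_entropy_real p (type_point N n))"
  proof (rule rel_entropy_finite)
    fix i assume "type_point N n $ i \<noteq> 0"
    thus "p$i \<noteq> 0" using pos[of i] by (simp add: type_point_nth)
  qed
  hence E: "ratio * P = exp (- real N * r)"
    using r likelihood_ratio_eq_exp[OF N n pos] by (simp add: P_def ratio_def)
  have P: "P \<ge> 0" unfolding P_def using p0 by (intro prod_nonneg) auto
  have weight: "mn_weight p N n = coeff * P" by (simp add: mn_weight_def coeff_def P_def)
  note coeff_bounds = multinomial_coeff_bounds[of n N, folded coeff_def ratio_def,
      OF n[unfolded types_def mem_Collect_eq]]
  have "mn_weight p N n \<le> exp 2 * (real N + 1) * ratio * P"
    unfolding weight by (intro mult_right_mono coeff_bounds(1) P)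
  thus "mn_weight p N n \<le> exp 2 * (real N + 1) * exp (- real N * r)"
    by (simp add: mult.assoc E)
  have "exp (- real N * r) / (exp 2 * (real N + 1)) ^ CARD('k)
        = ratio / (exp 2 * (real N + 1)) ^ CARD('k) * P"
    by (simp add: E)
  also have "\<dots> \<le> mn_weight p N n"
    unfolding weight by (intro mult_right_mono coeff_bounds(2) P)
  finally show "exp (- real N * r) / (exp 2 * (real N + 1)) ^ CARD('k) \<le> mn_weight p N n" .
qed

lemma mn_weight_eq_0:
  assumes "rel_entropy p (type_point N n) = \<infinity>"
  shows "mn_weight p N n = 0"
proof -
  obtain i where "type_point N n $ i \<noteq> 0" "p$i = 0"
    using rel_entropy_finite[of "type_point N n" p] assms by auto
  hence "(\<Prod>i\<in>UNIV. (p$i) ^ n i) = 0" by (intro prod_zero) (auto simp: type_point_nth)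
  thus ?thesis unfolding mn_weight_def by simp
qed


section \<open>Rounding points of the simplex to types\<close>

text \<open>Two points of the simplex differ at i0 by the total difference on the other
  coordinates; this is how rounding errors are moved onto a single coordinate.\<close>

lemma simplex_coord_diff:
  assumes "x \<in> simplexM" "y \<in> simplexM"
  shows "y$i0 - x$i0 = (\<Sum>j\<in>UNIV-{i0}. x$j - y$j)"
proof -
  have "x$i0 + (\<Sum>j\<in>UNIV-{i0}. x$j) = y$i0 + (\<Sum>j\<in>UNIV-{i0}. y$j)"
    using assms sum.remove[of UNIV i0 "\<lambda>j. x$j"] sum.remove[of UNIV i0 "\<lambda>j. y$j"]
    by (simp add: simplexM_def)
  thus ?thesis by (simp add: sum_subtractf)
qed

text \<open>Counts a_j for j \<noteq> i0 that do not exceed N y_j are completed to a type by putting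
  the remaining mass on coordinate i0.\<close>

lemma type_completion:
  fixes y :: "real^'k::finite"
  assumes y: "y \<in> simplexM" and a: "\<And>j. j \<noteq> i0 \<Longrightarrow> real (a j) \<le> real N * y$j"
  shows "\<exists>n\<in>types N. \<forall>j. j \<noteq> i0 \<longrightarrow> n j = a j"
proof -
  define S where "S = (\<Sum>j\<in>UNIV-{i0}. a j)"
  have "real S \<le> (\<Sum>j\<in>UNIV-{i0}. real N * y$j)"
    unfolding S_def of_nat_sum by (intro sum_mono a) simp
  also have "\<dots> \<le> (\<Sum>j\<in>UNIV. real N * y$j)"
    using y by (intro sum_mono2) (auto simp: simplex_nonneg)
  also have "\<dots> = real N" using y by (simp add: simplexM_def sum_distrib_left[symmetric])
  finally have SN: "S \<le> N" by (simp only: of_nat_le_iff)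
  define n where "n = a(i0 := N - S)"
  have "sum n UNIV = n i0 + sum n (UNIV - {i0})" by (rule sum.remove) auto
  also have "sum n (UNIV - {i0}) = S" unfolding S_def n_def by (intro sum.cong) auto
  finally have "n \<in> types N" using SN by (simp add: types_def n_def)
  thus ?thesis by (intro bexI[of _ n]) (auto simp: n_def)
qed

text \<open>Rounding: round the coordinates j \<noteq> i0 of p down to multiples of 1/N, replace those
  in Z by zero, and put the remaining mass on i0.\<close>

lemma round_down_to_type:
  fixes p :: "real^'k::finite"
  assumes p: "p \<in> simplexM" and N: "N > 0" and Z: "i0 \<notin> Z"
  shows "\<exists>n\<in>types N. \<forall>j. j \<noteq> i0 \<longrightarrow> type_point N n $ j \<le> p$j
           \<and> (j \<in> Z \<longrightarrow> type_point N n $ j = 0) \<and> (j \<notin> Z \<longrightarrow> p$j - type_point N n $ j \<le> 1 / real N)"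
proof -
  define a where "a j = (if j \<in> Z then 0 else nat \<lfloor>real N * p$j\<rfloor>)" for j
  have a_floor: "j \<notin> Z \<Longrightarrow> real (a j) = of_int \<lfloor>real N * p$j\<rfloor>" for j
    unfolding a_def using simplex_nonneg[OF p, of j] by simp
  have a_le: "real (a j) \<le> real N * p$j" for j
    using a_floor[of j] of_int_floor_le[of "real N * p$j"] simplex_nonneg[OF p, of j]
    by (cases "j \<in> Z") (auto simp: a_def)
  obtain n where n: "n \<in> types N" and n_a: "\<And>j. j \<noteq> i0 \<Longrightarrow> n j = a j"
    using type_completion[OF p, of i0 a N] a_le by blast
  have "type_point N n $ j \<le> p$j \<and> (j \<in> Z \<longrightarrow> type_point N n $ j = 0)
        \<and> (j \<notin> Z \<longrightarrow> p$j - type_point N n $ j \<le> 1 / real N)" if "j \<noteq> i0" for j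
  proof -
    have diff: "p$j - type_point N n $ j = (real N * p$j - real (a j)) / real N"
      using N by (simp add: type_point_nth n_a[OF that] field_simps)
    have "0 \<le> p$j - type_point N n $ j" unfolding diff using a_le[of j] by simp
    moreover have "p$j - type_point N n $ j \<le> 1 / real N" if "j \<notin> Z"
    proof -
      have "real N * p$j - real (a j) \<le> 1"
        using a_floor[OF that] real_of_int_floor_gt_diff_one[of "real N * p$j"] by linarith
      thus ?thesis unfolding diff using N by (simp add: divide_right_mono)
    qed
    moreover have "type_point N n $ j = 0" if "j \<in> Z"
      using that n_a[OF \<open>j \<noteq> i0\<close>] by (simp add: type_point_nth a_def)
    ultimately show ?thesis by auto
  qed
  thus ?thesis using n by blast
qed

lemma type_point_approx:
  fixes y :: "real^'k::finite"
  assumes y: "y \<in> simplexM" and N: "N > 0"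
  shows "\<exists>n\<in>types N. dmax (type_point N n) y \<le> real CARD('k) / real N"
proof -
  obtain i0 :: 'k where True by simp
  obtain n where n: "n \<in> types N" and below: "\<And>j. j \<noteq> i0 \<Longrightarrow>
      type_point N n $ j \<le> y$j \<and> y$j - type_point N n $ j \<le> 1 / real N"
    using round_down_to_type[OF y N, of i0 "{}"] by auto
  define q where "q = type_point N n"
  have qM: "q \<in> simplexM" unfolding q_def using n N by (rule type_point_in_simplexM)
  have card_ge_1: "1 \<le> real CARD('k)" by simp
  have "\<bar>q$j - y$j\<bar> \<le> real CARD('k) / real N" for j
  proof (cases "j = i0")
    case False
    hence "\<bar>q$j - y$j\<bar> \<le> 1 / real N" using below[of j] unfolding q_def by linarith
    also have "\<dots> \<le> real CARD('k) / real N" using card_ge_1 by (simp add: divide_right_mono)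
    finally show ?thesis .
  next
    case True
    have "q$i0 - y$i0 = (\<Sum>j\<in>UNIV-{i0}. y$j - q$j)" by (rule simplex_coord_diff[OF y qM])
    moreover have "(\<Sum>j\<in>UNIV-{i0}. y$j - q$j) \<le> (\<Sum>j\<in>(UNIV::'k set)-{i0}. 1 / real N)"
      using below unfolding q_def by (intro sum_mono) auto
    moreover have "(\<Sum>j\<in>(UNIV::'k set)-{i0}. 1 / real N) \<le> real CARD('k) / real N"
      using N by (simp add: card_Diff_singleton_if divide_right_mono)
    moreover have "0 \<le> (\<Sum>j\<in>UNIV-{i0}. y$j - q$j)"
      using below unfolding q_def by (intro sum_nonneg) auto
    ultimately show ?thesis unfolding True by linarith
  qed
  thus ?thesis using n dmax_le unfolding q_def by blast
qed

text \<open>Approximation inside a ball: pushing y towards the centre c by the fraction t and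
  then rounding gives, for large N, a type point still in the ball and close to y.\<close>

lemma type_point_in_ball_near:
  fixes c y :: "real^'k::finite"
  assumes c: "c \<in> simplexM" and y: "y \<in> simplexM" and cy: "dmax c y < r"
    and t: "0 < t" "t < 1" and N: "N > 0" and Nt: "real CARD('k) / real N \<le> t * r"
  shows "\<exists>n\<in>types N. dmax c (type_point N n) < r
           \<and> norm (type_point N n - y) \<le> t * real CARD('k) + real CARD('k) * real CARD('k) / real N"
proof -
  define k where "k = real CARD('k)"
  define y' where "y' = (1 - t) *\<^sub>R y + t *\<^sub>R c"
  have y'M: "y' \<in> simplexM" unfolding y'_def using y c t by (intro convex_comb_simplexM) auto
  have "dmax c y' \<le> (1 - t) * dmax c y" unfolding y'_def using t by (intro dmax_convex_comb) auto
  also have "\<dots> < (1 - t) * r" using cy t by (intro mult_strict_left_mono) auto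
  also have "\<dots> \<le> (1 - t) * r + t * r - k / real N" using Nt unfolding k_def by simp
  finally have cy': "dmax c y' < r - k / real N" by (simp add: algebra_simps)
  have "y' - y = t *\<^sub>R (c - y)" by (simp add: y'_def algebra_simps)
  hence "norm (y' - y) = t * norm (c - y)" using t by simp
  also have "\<dots> \<le> t * (k * dmax c y)"
    using t norm_le_card_dmax[of c y] unfolding k_def by (intro mult_left_mono) auto
  also have "\<dots> \<le> t * k"
    using t dmax_simplexM_le_1[OF c y] unfolding k_def by (simp add: mult_left_le)
  finally have y'y: "norm (y' - y) \<le> t * k" .
  obtain n where n: "n \<in> types N" and nd: "dmax (type_point N n) y' \<le> k / real N"
    using type_point_approx[OF y'M N] unfolding k_def by blast
  define q where "q = type_point N n"
  have "dmax c q \<le> dmax c y' + dmax y' q" by (rule dmax_triangle)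
  hence "dmax c q < r" using cy' nd by (simp add: q_def dmax_comm)
  moreover have "norm (q - y') \<le> k * (k / real N)"
    using norm_le_card_dmax[of q y'] nd unfolding q_def k_def
    by (meson mult_left_mono of_nat_0_le_iff order_trans)
  hence "norm (q - y) \<le> t * k + k * k / real N"
    using norm_triangle_ineq[of "q - y'" "y' - y"] y'y by simp
  ultimately show ?thesis using n unfolding q_def k_def by blast
qed


section \<open>Bounds on the multinomial law\<close>

lemma ereal_mult_elog: "N > 0 \<Longrightarrow> s > 0 \<Longrightarrow> ereal (1 / real N) * elog s = ereal (ln s / real N)"
  by (simp add: elog_def)

lemma mn_weight_le_of_entropy_ge:
  fixes p :: "real^'k::finite"
  assumes p: "p \<in> simplexM" and N: "N > 0" and n: "n \<in> types N"
    and m: "ereal m \<le> rel_entropy p (type_point N n)"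
  shows "mn_weight p N n \<le> exp 2 * (real N + 1) * exp (- real N * m)"
proof (cases "rel_entropy p (type_point N n)")
  case (real r)
  hence "m \<le> r" using m by simp
  hence "exp (- real N * r) \<le> exp (- real N * m)" by (simp add: mult_left_mono)
  thus ?thesis using mn_weight_bounds(1)[OF p N n real] by (simp add: order_trans)
next
  case PInf thus ?thesis using mn_weight_eq_0[OF PInf] by simp
next
  case MInf thus ?thesis using m by simp
qed

text \<open>Upper bound (v): (1/N) log P[Z(p)/N \<in> \<Gamma>] <= - inf_\<Gamma> H(.|p) + O(log N / N), uniformly in p.
  The weight of every type in \<Gamma> is at most e^2 (N+1) exp(-N inf H), and there are at most
  (N+1)^k types.\<close>

lemma mn_prob_upper_bound:
  fixes p :: "real^'k::finite"
  assumes p: "p \<in> simplexM" and N: "N > 0" and \<Gamma>: "\<Gamma> \<subseteq> simplexM"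
  shows "ereal (1 / real N) * elog (mn_prob p N \<Gamma>)
          \<le> - (INF y\<in>\<Gamma>. rel_entropy p y) + ereal ((2 + (real CARD('k) + 1) * ln (real N + 1)) / real N)"
proof -
  define S where "S = {n \<in> types N. type_point N n \<in> \<Gamma>}"
  define m where "m = (INF y\<in>\<Gamma>. rel_entropy p y)"
  have s: "mn_prob p N \<Gamma> = (\<Sum>n\<in>S. mn_weight p N n)" unfolding S_def mn_prob_def ..
  show ?thesis
  proof (cases "mn_prob p N \<Gamma> > 0")
    case False
    thus ?thesis using N by (simp add: elog_def)
  next
    case True
    then obtain n0 where n0: "n0 \<in> S" "mn_weight p N n0 \<noteq> 0"
      unfolding s by (metis less_irrefl sum.neutral)
    have "m \<le> rel_entropy p (type_point N n0)" unfolding m_def using n0 by (auto simp: S_def intro: INF_lower)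
    moreover have "rel_entropy p (type_point N n0) \<noteq> \<infinity>" using n0 mn_weight_eq_0 by blast
    moreover have "m \<ge> 0" unfolding m_def using rel_entropy_nonneg[OF p] \<Gamma> by (intro INF_greatest) auto
    ultimately obtain mr where mr: "m = ereal mr" by (cases m) auto
    have "mn_prob p N \<Gamma> \<le> (\<Sum>n\<in>S. exp 2 * (real N + 1) * exp (- real N * mr))"
      unfolding s
    proof (intro sum_mono mn_weight_le_of_entropy_ge[OF p N])
      fix n assume "n \<in> S"
      hence "n \<in> types N" and "m \<le> rel_entropy p (type_point N n)"
        unfolding S_def m_def by (auto intro: INF_lower)
      thus "n \<in> types N" "ereal mr \<le> rel_entropy p (type_point N n)" using mr by auto
    qed
    also have "\<dots> = real (card S) * (exp 2 * (real N + 1) * exp (- real N * mr))" by simp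
    also have "\<dots> \<le> (real N + 1) ^ CARD('k) * (exp 2 * (real N + 1) * exp (- real N * mr))"
    proof (intro mult_right_mono)
      have "real (card S) \<le> real ((N+1) ^ CARD('k))"
        unfolding S_def of_nat_le_iff by (rule card_types_subset)
      thus "real (card S) \<le> (real N + 1) ^ CARD('k)" by (simp add: add.commute)
    qed auto
    finally have "ln (mn_prob p N \<Gamma>)
        \<le> ln ((real N + 1) ^ CARD('k) * (exp 2 * (real N + 1) * exp (- real N * mr)))"
      using True by simp
    also have "\<dots> = real CARD('k) * ln (real N + 1) + 2 + ln (real N + 1) - real N * mr"
      by (simp add: ln_mult ln_realpow)
    finally have "ln (mn_prob p N \<Gamma>) / real N
        \<le> - mr + (2 + (real CARD('k) + 1) * ln (real N + 1)) / real N"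
      using N by (simp add: field_simps)
    thus ?thesis using ereal_mult_elog[OF N True] mr unfolding m_def by simp
  qed
qed

lemma mn_prob_lower_bound:
  fixes p :: "real^'k::finite"
  assumes p: "p \<in> simplexM" and N: "N > 0" and n: "n \<in> types N" and n\<Gamma>: "type_point N n \<in> \<Gamma>"
    and r: "rel_entropy p (type_point N n) = ereal r"
  shows "ereal (- r - real CARD('k) * (2 + ln (real N + 1)) / real N)
          \<le> ereal (1 / real N) * elog (mn_prob p N \<Gamma>)"
proof -
  define lb where "lb = exp (- real N * r) / (exp 2 * (real N + 1)) ^ CARD('k)"
  have "lb \<le> mn_weight p N n" unfolding lb_def by (rule mn_weight_bounds(2)[OF p N n r])
  also have "\<dots> \<le> mn_prob p N \<Gamma>" unfolding mn_prob_def using n n\<Gamma> simplex_nonneg[OF p]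
    by (intro member_le_sum mn_weight_nonneg finite_types_subset) auto
  finally have lb_le: "lb \<le> mn_prob p N \<Gamma>" .
  have lb_pos: "lb > 0" by (simp add: lb_def)
  hence "ln lb \<le> ln (mn_prob p N \<Gamma>)" using lb_le by (intro ln_mono) auto
  moreover have "ln lb = - real N * r - real CARD('k) * (2 + ln (real N + 1))"
    by (simp add: lb_def ln_div ln_realpow ln_mult)
  ultimately have "- real N * r - real CARD('k) * (2 + ln (real N + 1)) \<le> ln (mn_prob p N \<Gamma>)"
    by linarith
  hence "(- real N * r - real CARD('k) * (2 + ln (real N + 1))) / real N \<le> ln (mn_prob p N \<Gamma>) / real N"
    by (intro divide_right_mono) auto
  moreover have "(- real N * r - real CARD('k) * (2 + ln (real N + 1))) / real N
      = - r - real CARD('k) * (2 + ln (real N + 1)) / real N" using N by (simp add: field_simps)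
  ultimately have "- r - real CARD('k) * (2 + ln (real N + 1)) / real N \<le> ln (mn_prob p N \<Gamma>) / real N"
    by simp
  moreover have "mn_prob p N \<Gamma> > 0" using lb_pos lb_le by linarith
  ultimately show ?thesis using ereal_mult_elog[OF N] by simp
qed


lemma rel_entropy_INF_approx:
  fixes p :: "real^'k::finite"
  assumes p: "p \<in> simplexM" and p_pos: "\<And>i. p$i > 0" and U: "U \<subseteq> simplexM" "c \<in> U" and \<epsilon>: "\<epsilon> > 0"
  shows "\<exists>mr. (INF y\<in>U. rel_entropy p y) = ereal mr \<and> (\<exists>y\<in>U. rel_entropy_real p y < mr + \<epsilon>)"
proof -
  define m where "m = (INF y\<in>U. rel_entropy p y)"
  have real: "rel_entropy p y = ereal (rel_entropy_real p y)" for y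
    using p_pos by (intro rel_entropy_finite) (metis less_irrefl)
  have "m \<le> rel_entropy p c" unfolding m_def using U by (intro INF_lower)
  moreover have "m \<ge> 0" unfolding m_def using rel_entropy_nonneg[OF p] U by (intro INF_greatest) auto
  ultimately obtain mr where mr: "m = ereal mr" using real[of c] by (cases m) auto
  hence "(INF y\<in>U. rel_entropy p y) < ereal (mr + \<epsilon>)" using \<epsilon> by (simp add: m_def)
  then obtain y where "y \<in> U" "rel_entropy p y < ereal (mr + \<epsilon>)" by (auto simp: INF_less_iff)
  thus ?thesis using mr real[of y] unfolding m_def by auto
qed

lemma mn_prob_lower_bound_INF:
  fixes p :: "real^'k::finite"
  assumes p: "p \<in> simplexM" and p_pos: "\<And>i. p$i > 0" and N: "N > 0"
    and U: "U \<subseteq> simplexM" "c \<in> U" and \<epsilon>: "\<epsilon> > 0"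
    and approx: "\<And>y. y \<in> U \<Longrightarrow> \<exists>n\<in>types N. type_point N n \<in> U
                   \<and> rel_entropy_real p (type_point N n) \<le> rel_entropy_real p y + a"
  shows "- (INF y\<in>U. rel_entropy p y) - ereal (\<epsilon> + a + real CARD('k) * (2 + ln (real N + 1)) / real N)
          \<le> ereal (1 / real N) * elog (mn_prob p N U)"
proof -
  obtain mr y where mr: "(INF y\<in>U. rel_entropy p y) = ereal mr" and y: "y \<in> U"
      and y_near: "rel_entropy_real p y < mr + \<epsilon>"
    using rel_entropy_INF_approx[OF p p_pos U \<epsilon>] by blast
  obtain n where n: "n \<in> types N" and qU: "type_point N n \<in> U"
      and q_near: "rel_entropy_real p (type_point N n) \<le> rel_entropy_real p y + a"
    using approx[OF y] by blast
  have "rel_entropy p (type_point N n) = ereal (rel_entropy_real p (type_point N n))"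
    using p_pos by (intro rel_entropy_finite) (metis less_irrefl)
  from mn_prob_lower_bound[OF p N n qU this]
  show ?thesis using mr y_near q_near by (simp add: order_trans[rotated])
qed


section \<open>Rounding to the boundary\<close>

lemma simplex_max_coord:
  fixes p :: "real^'k::finite"
  assumes p: "p \<in> simplexM"
  shows "\<exists>i0. 1 \<le> real CARD('k) * p$i0"
proof -
  have "Max (range (\<lambda>j. p$j)) \<in> range (\<lambda>j. p$j)" by (intro Max_in) auto
  then obtain i0 where "p$i0 = Max (range (\<lambda>j. p$j))" by (metis imageE)
  hence max: "p$j \<le> p$i0" for j by simp
  have "1 = (\<Sum>j\<in>UNIV. p$j)" using p by (simp add: simplexM_def)
  also have "\<dots> \<le> (\<Sum>j\<in>(UNIV::'k set). p$i0)" by (intro sum_mono max)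
  finally show ?thesis by auto
qed

lemma rel_entropy_real_le_excess:
  assumes p: "p \<in> simplexM" and q: "q \<in> simplexM" and p_pos: "p$i0 > 0"
    and below: "\<And>j. j \<noteq> i0 \<Longrightarrow> q$j \<le> p$j"
  shows "rel_entropy_real p q \<le> (q$i0 - p$i0) / p$i0"
proof -
  have "0 \<le> (\<Sum>j\<in>UNIV-{i0}. p$j - q$j)" using below by (intro sum_nonneg) auto
  hence excess: "q$i0 - p$i0 \<ge> 0" using simplex_coord_diff[OF p q, of i0] by simp
  have "rel_entropy_real p q = xlog_ratio (q$i0) (p$i0) + (\<Sum>j\<in>UNIV-{i0}. xlog_ratio (q$j) (p$j))"
    unfolding rel_entropy_real_def by (simp add: sum.remove)
  also have "(\<Sum>j\<in>UNIV-{i0}. xlog_ratio (q$j) (p$j)) \<le> 0"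
    using below by (intro sum_nonpos xlog_ratio_nonpos simplex_nonneg[OF q]) auto
  also have "xlog_ratio (q$i0) (p$i0) \<le> q$i0 * (q$i0 - p$i0) / p$i0"
    using excess p_pos by (intro xlog_ratio_le) auto
  also have "\<dots> \<le> (q$i0 - p$i0) / p$i0"
    using excess p_pos simplex_le_1[OF q, of i0] by (intro divide_right_mono mult_left_le_one_le) auto
  finally show ?thesis by simp
qed

text \<open>A point p with a coordinate p_i <= e is close in entropy to a type on the boundary
  face q_i = 0: round p down with q_i = 0, putting the remaining mass on a largest
  coordinate i0 \<noteq> i.\<close>

lemma boundary_type_near:
  fixes p :: "real^'k::finite"
  assumes p: "p \<in> simplexM" and N: "N > 0" and small: "p$i \<le> e" and e: "e * real CARD('k) < 1"
  shows "\<exists>n\<in>types N. type_point N n \<in> simplexM0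
           \<and> rel_entropy p (type_point N n) = ereal (rel_entropy_real p (type_point N n))
           \<and> rel_entropy_real p (type_point N n) \<le> real CARD('k) * (e + real CARD('k) / real N)"
proof -
  define k where "k = real CARD('k)"
  obtain i0 where large: "1 \<le> k * p$i0"
    using simplex_max_coord[OF p] unfolding k_def by blast
  have k_pos: "k > 0" unfolding k_def by simp
  have p_pos: "p$i0 > 0" using large k_pos simplex_nonneg[OF p, of i0]
    by (metis mult_eq_0_iff not_one_le_zero order_less_le)
  have inv_le: "1 / p$i0 \<le> k" using large p_pos by (simp add: field_simps)
  have "i \<noteq> i0"
  proof
    assume "i = i0"
    hence "k * p$i0 \<le> k * e" using small k_pos by (intro mult_left_mono) auto
    moreover have "k * e < 1" using e unfolding k_def by (simp add: mult.commute)
    ultimately show False using large by linarith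
  qed
  then obtain n where n: "n \<in> types N" and round: "\<And>j. j \<noteq> i0 \<Longrightarrow> type_point N n $ j \<le> p$j
      \<and> (j = i \<longrightarrow> type_point N n $ j = 0) \<and> (j \<noteq> i \<longrightarrow> p$j - type_point N n $ j \<le> 1 / real N)"
    using round_down_to_type[OF p N, of i0 "{i}"] by auto
  define q where "q = type_point N n"
  have qM: "q \<in> simplexM" unfolding q_def using n N by (rule type_point_in_simplexM)
  have below: "q$j \<le> p$j" "p$j - q$j \<le> (if j = i then e else 0) + 1 / real N" if "j \<noteq> i0" for j
    using round[OF that] small N unfolding q_def by (auto simp: add_increasing2)
  have "q$i0 - p$i0 = (\<Sum>j\<in>UNIV-{i0}. p$j - q$j)" by (rule simplex_coord_diff[OF p qM])
  also have "\<dots> \<le> (\<Sum>j\<in>UNIV-{i0}. (if j = i then e else 0) + 1 / real N)"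
    using below(2) by (intro sum_mono) auto
  also have "\<dots> \<le> e + k / real N"
    using \<open>i \<noteq> i0\<close> N by (simp add: sum.distrib card_Diff_singleton_if k_def divide_right_mono)
  finally have excess: "q$i0 - p$i0 \<le> e + k / real N" .
  have "0 \<le> (\<Sum>j\<in>UNIV-{i0}. p$j - q$j)" using below(1) by (intro sum_nonneg) auto
  hence excess_nonneg: "0 \<le> q$i0 - p$i0" using simplex_coord_diff[OF p qM, of i0] by simp
  have "rel_entropy_real p q \<le> (q$i0 - p$i0) * (1 / p$i0)"
    using rel_entropy_real_le_excess[OF p qM p_pos] below(1) by simp
  also have "\<dots> \<le> (e + k / real N) * k"
    using excess excess_nonneg inv_le p_pos by (intro mult_mono) auto
  finally have "rel_entropy_real p q \<le> k * (e + k / real N)" by (simp add: mult.commute)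
  moreover have "q \<in> simplexM0"
    using qM round[OF \<open>i \<noteq> i0\<close>] by (auto simp: simplexM0_def q_def intro!: prod_zero)
  moreover have "rel_entropy p q = ereal (rel_entropy_real p q)"
  proof (rule rel_entropy_finite)
    fix j assume "q$j \<noteq> 0"
    thus "p$j \<noteq> 0"
      using below(1)[of j] p_pos simplex_nonneg[OF qM, of j] by (cases "j = i0") auto
  qed
  ultimately show ?thesis using n unfolding q_def k_def by blast
qed

lemma mn_prob_boundary_lower_bound:
  fixes p :: "real^'k::finite"
  assumes p: "p \<in> simplexM" and N: "N > 0" and small: "p$i \<le> e" and e: "e * real CARD('k) < 1"
  shows "ereal (- real CARD('k) * (e + real CARD('k) / real N) - real CARD('k) * (2 + ln (real N + 1)) / real N)
           \<le> ereal (1 / real N) * elog (mn_prob p N simplexM0)"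
proof -
  obtain n where n: "n \<in> types N" and q0: "type_point N n \<in> simplexM0"
      and r: "rel_entropy p (type_point N n) = ereal (rel_entropy_real p (type_point N n))"
      and r_le: "rel_entropy_real p (type_point N n) \<le> real CARD('k) * (e + real CARD('k) / real N)"
    using boundary_type_near[OF p N small e] by blast
  have "ereal (- real CARD('k) * (e + real CARD('k) / real N) - real CARD('k) * (2 + ln (real N + 1)) / real N)
      \<le> ereal (- rel_entropy_real p (type_point N n) - real CARD('k) * (2 + ln (real N + 1)) / real N)"
    using r_le by simp
  also have "\<dots> \<le> ereal (1 / real N) * elog (mn_prob p N simplexM0)"
    by (rule mn_prob_lower_bound[OF p N n q0 r])
  finally show ?thesis .
qed


section \<open>Continuity of the rate function\<close>

lemma continuous_on_xlnx: "continuous_on {0..} (\<lambda>x::real. x * ln x)"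
proof (rule continuous_on_eq_continuous_within[THEN iffD2], intro ballI)
  fix x :: real assume x: "x \<in> {0..}"
  show "continuous (at x within {0..}) (\<lambda>x. x * ln x)"
  proof (cases "x = 0")
    case True
    have "((\<lambda>x::real. x * ln x) \<longlongrightarrow> 0) (at_right 0)" by real_asymp
    thus ?thesis using True by (simp add: continuous_within at_within_Ici_at_right)
  next
    case False
    hence "isCont (\<lambda>x. x * ln x) x" using x by (intro continuous_intros) auto
    thus ?thesis by (rule continuous_at_imp_continuous_at_within)
  qed
qed

text \<open>For a continuous family of strictly positive parameters P x, the entropy H(y | P x) is
  jointly continuous: on the simplex it equals sum_i (y_i ln y_i - y_i ln P_i(x)).\<close>

lemma continuous_on_rel_entropy_real:
  fixes P :: "'a::topological_space \<Rightarrow> real^'k::finite"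
  assumes P_cont: "continuous_on S P" and P_pos: "\<And>x i. x \<in> S \<Longrightarrow> P x $ i > 0"
  shows "continuous_on (S \<times> simplexM) (\<lambda>(x,y). rel_entropy_real (P x) y)"
proof -
  define G where "G z = (\<Sum>i\<in>UNIV. snd z $ i * ln (snd z $ i) - snd z $ i * ln (P (fst z) $ i))" for z
  have "rel_entropy_real (P x) y = G (x,y)" if "x \<in> S" "y \<in> simplexM" for x y
    unfolding rel_entropy_real_def G_def
    using simplex_nonneg[OF that(2)] P_pos[OF that(1)]
    by (intro sum.cong) (auto simp: xlog_ratio_def ln_div right_diff_distrib less_le)
  moreover have "continuous_on (S \<times> simplexM) G"
  proof -
    have "continuous_on (S \<times> simplexM) (\<lambda>z. snd z $ i * ln (snd z $ i))" for i :: 'k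
      by (rule continuous_on_compose2[OF continuous_on_xlnx])
        (intro continuous_intros, auto simp: simplex_nonneg)
    moreover have "continuous_on (S \<times> simplexM) (\<lambda>z. snd z $ i * ln (P (fst z) $ i))" for i :: 'k
    proof (intro continuous_intros ballI)
      show "continuous_on (S \<times> simplexM) (\<lambda>z. P (fst z))"
        by (rule continuous_on_compose2[OF P_cont]) (intro continuous_intros, auto)
      show "P (fst z) $ i \<noteq> 0" if "z \<in> S \<times> simplexM" for z :: "'a \<times> (real^'k)"
        using P_pos[of "fst z" i] that by auto
    qed
    ultimately show ?thesis unfolding G_def by (intro continuous_on_sum continuous_on_diff)
  qed
  ultimately show ?thesis by (auto intro: continuous_on_cong[THEN iffD1, rotated 2])
qed

lemma F_continuous:
  assumes F_def: "\<And>x. F x = (\<chi> i. x$i * f x $ i)" and f_cont: "continuous_on simplexM f"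
  shows "continuous_on simplexM F"
  unfolding F_def[abs_def] by (intro continuous_intros f_cont)

lemma F_pos_on_simplexM1:
  assumes F_def: "\<And>x. F x = (\<chi> i. x$i * f x $ i)" and f_pos: "\<And>x i. x \<in> simplexM \<Longrightarrow> f x $ i > 0"
    and x: "x \<in> simplexM1"
  shows "F x $ i > 0"
  using simplexM1_pos[OF x, of i] f_pos[of x i] x by (simp add: F_def simplexM1_def)

lemma rhoF_real_on_simplexM1:
  assumes F_pos: "\<And>i. F x $ i > 0"
  shows "rhoF F x y = ereal (rel_entropy_real (F x) y)"
  unfolding rhoF_rel_entropy using F_pos by (intro rel_entropy_finite) (metis less_irrefl)

lemma rhoF_continuous:
  assumes F_def: "\<And>x. F x = (\<chi> i. x$i * f x $ i)" and f_pos: "\<And>x i. x \<in> simplexM \<Longrightarrow> f x $ i > 0"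
    and f_cont: "continuous_on simplexM f"
  shows "continuous_on (simplexM1 \<times> simplexM) (\<lambda>(x,y). rhoF F x y)"
proof -
  have F_pos: "\<And>x i. x \<in> simplexM1 \<Longrightarrow> F x $ i > 0"
    by (rule F_pos_on_simplexM1[OF F_def f_pos])
  have "continuous_on simplexM1 F"
    by (rule continuous_on_subset[OF F_continuous[OF F_def f_cont]]) (auto simp: simplexM1_def)
  hence "continuous_on (simplexM1 \<times> simplexM) (\<lambda>z. ereal (case z of (x,y) \<Rightarrow> rel_entropy_real (F x) y))"
    by (intro continuous_on_ereal continuous_on_rel_entropy_real F_pos)
  thus ?thesis
    by (rule continuous_on_cong[THEN iffD1, rotated 2]) (auto simp: rhoF_real_on_simplexM1 F_pos)
qed


lemma rel_entropy_real_uniform_modulus: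
  fixes P :: "real^'k::finite \<Rightarrow> real^'k"
  assumes K: "compact K" and P_cont: "continuous_on K P" and P_pos: "\<And>x i. x \<in> K \<Longrightarrow> P x $ i > 0"
    and \<epsilon>: "\<epsilon> > 0"
  shows "\<exists>\<delta>>0. \<forall>x\<in>K. \<forall>y\<in>simplexM. \<forall>q\<in>simplexM. norm (q - y) < \<delta> \<longrightarrow>
           \<bar>rel_entropy_real (P x) q - rel_entropy_real (P x) y\<bar> < \<epsilon>"
proof -
  have "uniformly_continuous_on (K \<times> simplexM) (\<lambda>(x,y). rel_entropy_real (P x) y)"
    by (intro compact_uniformly_continuous compact_Times K compact_simplexM
        continuous_on_rel_entropy_real P_cont P_pos)
  then obtain \<delta> where \<delta>: "\<delta> > 0" and uc: "\<And>z z'. z \<in> K \<times> simplexM \<Longrightarrow> z' \<in> K \<times> simplexM \<Longrightarrow>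
      dist z' z < \<delta> \<Longrightarrow> dist ((\<lambda>(x,y). rel_entropy_real (P x) y) z') ((\<lambda>(x,y). rel_entropy_real (P x) y) z) < \<epsilon>"
    unfolding uniformly_continuous_on_def using \<epsilon> by metis
  show ?thesis
  proof (intro exI[of _ \<delta>] conjI ballI impI \<delta>)
    fix x y q :: "real^'k" assume "x \<in> K" "y \<in> simplexM" "q \<in> simplexM" "norm (q - y) < \<delta>"
    thus "\<bar>rel_entropy_real (P x) q - rel_entropy_real (P x) y\<bar> < \<epsilon>"
      using uc[of "(x,y)" "(x,q)"] by (simp add: dist_Pair_Pair dist_norm dist_real_def)
  qed
qed

section \<open>The large-deviation bounds (LD)(iv), (LD)(v) and (LD0)\<close>

text \<open>All error terms are of the form (a + c log(N+1))/N and hence vanish as N \<rightarrow> \<infinity>.\<close>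

lemma eventually_log_over_N_less:
  assumes "b > 0"
  shows "eventually (\<lambda>N. (a + c * ln (real N + 1)) / real N < b) sequentially"
proof -
  have "(\<lambda>N::nat. (a + c * ln (real N + 1)) / real N) \<longlonglongrightarrow> 0" by real_asymp
  thus ?thesis using assms by (rule order_tendstoD(2))
qed

text \<open>A statement holding for all large N holds for all small \<epsilon> = 1/N, the form required
  by (LD).\<close>

lemma eventually_imp_small_epsilon:
  assumes "eventually P sequentially"
  shows "\<exists>\<epsilon>0>0. \<forall>N. N > 0 \<and> 1 / real N < \<epsilon>0 \<longrightarrow> P N"
proof -
  obtain N0 where N0: "\<And>N. N \<ge> N0 \<Longrightarrow> P N" using assms by (auto simp: eventually_sequentially)
  show ?thesis
  proof (intro exI[of _ "1 / real (Suc N0)"] conjI allI impI)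
    fix N assume N: "N > 0 \<and> 1 / real N < 1 / real (Suc N0)"
    have "real (Suc N0) < real N"
    proof (rule ccontr)
      assume "\<not> real (Suc N0) < real N"
      hence "1 / real (Suc N0) \<le> 1 / real N" using N by (intro divide_left_mono) auto
      thus False using N by simp
    qed
    thus "P N" by (intro N0) simp
  qed simp
qed

lemma LD_upper_bound:
  fixes F :: "real^'k::finite \<Rightarrow> real^'k"
  assumes F_maps: "\<And>x. x \<in> simplexM \<Longrightarrow> F x \<in> simplexM"
    and C: "C \<subseteq> simplexM" and eta: "\<eta> > 0"
  shows "\<exists>\<epsilon>0>0. \<forall>N. N > 0 \<and> 1 / real N < \<epsilon>0 \<longrightarrow>
           (\<forall>x\<in>simplexM. ereal (1 / real N) * elog (mn_kernel F N x C)
                     \<le> - (INF y\<in>C. rhoF F x y) + ereal \<eta>)"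
proof (rule eventually_imp_small_epsilon)
  show "eventually (\<lambda>N. \<forall>x\<in>simplexM. ereal (1 / real N) * elog (mn_kernel F N x C)
                     \<le> - (INF y\<in>C. rhoF F x y) + ereal \<eta>) sequentially"
    using eventually_log_over_N_less[OF eta, of 2 "real CARD('k) + 1"] eventually_gt_at_top[of 0]
  proof eventually_elim
    case (elim N)
    show ?case
    proof
      fix x :: "real^'k" assume "x \<in> simplexM"
      have "ereal (1 / real N) * elog (mn_kernel F N x C)
          \<le> - (INF y\<in>C. rel_entropy (F x) y) + ereal ((2 + (real CARD('k) + 1) * ln (real N + 1)) / real N)"
        unfolding mn_kernel_eq_mn_prob using elim by (intro mn_prob_upper_bound F_maps \<open>x \<in> simplexM\<close> C)
      also have "\<dots> \<le> - (INF y\<in>C. rel_entropy (F x) y) + ereal \<eta>"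
        using elim by (intro add_left_mono) simp
      finally show "ereal (1 / real N) * elog (mn_kernel F N x C) \<le> - (INF y\<in>C. rhoF F x y) + ereal \<eta>"
        by (simp add: rhoF_rel_entropy)
    qed
  qed
qed


text \<open>For large N the types in a ball U are \<delta>-dense in U, uniformly: push a point slightly
  towards the centre and round it.\<close>

lemma eventually_types_dense_in_ball:
  fixes c :: "real^'k::finite"
  assumes c: "c \<in> simplexM" and r: "r > 0" and \<delta>: "\<delta> > 0"
  shows "eventually (\<lambda>N. \<forall>y\<in>simplexM. dmax c y < r \<longrightarrow>
           (\<exists>n\<in>types N. dmax c (type_point N n) < r \<and> norm (type_point N n - y) < \<delta>)) sequentially"
proof -
  define k where "k = real CARD('k)"
  have k_pos: "k > 0" unfolding k_def by simp
  define t where "t = min (1/2) (\<delta> / (2 * k))"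
  have t: "0 < t" "t < 1" "t * k \<le> \<delta> / 2" using \<delta> k_pos by (auto simp: t_def min_def field_simps)
  have tr: "t * r > 0" and half_\<delta>: "\<delta> / 2 > 0" using t r \<delta> by auto
  show ?thesis
    using eventually_log_over_N_less[OF tr, of k 0] eventually_log_over_N_less[OF half_\<delta>, of "k * k" 0]
      eventually_gt_at_top[of 0]
  proof eventually_elim
    case (elim N)
    hence N: "N > 0" and Nt: "k / real N \<le> t * r" and N\<delta>: "k * k / real N < \<delta> / 2" by auto
    show ?case
    proof (intro ballI impI)
      fix y assume "y \<in> simplexM" "dmax c y < r"
      then obtain n where "n \<in> types N" "dmax c (type_point N n) < r"
          "norm (type_point N n - y) \<le> t * k + k * k / real N"
        using type_point_in_ball_near[OF c _ _ t(1,2) N, of y r] Nt unfolding k_def by auto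
      moreover have "t * k + k * k / real N < \<delta>" using t(3) N\<delta> by linarith
      ultimately show "\<exists>n\<in>types N. dmax c (type_point N n) < r \<and> norm (type_point N n - y) < \<delta>"
        by force
    qed
  qed
qed

text \<open>By uniform continuity, every point y of the ball U has a type
  q \<in> U with H(q|F x) <= H(y|F x) + \<eta>/4 for all x \<in> K once N is large, and the lower
  bound over U applies.\<close>

lemma LD_lower_bound:
  fixes f :: "real^'k::finite \<Rightarrow> real^'k" and F :: "real^'k \<Rightarrow> real^'k"
  assumes F_def: "\<And>x. F x = (\<chi> i. x$i * f x $ i)"
    and f_pos: "\<And>x i. x \<in> simplexM \<Longrightarrow> f x $ i > 0"
    and f_cont: "continuous_on simplexM f"
    and F_maps: "\<And>x. x \<in> simplexM \<Longrightarrow> F x \<in> simplexM"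
    and K: "compact K" "K \<subseteq> simplexM1" and U: "is_open_ballM U" and eta: "\<eta> > 0"
  shows "\<exists>\<epsilon>0>0. \<forall>N. N > 0 \<and> 1 / real N < \<epsilon>0 \<longrightarrow>
           (\<forall>x\<in>K. ereal (1 / real N) * elog (mn_kernel F N x U)
                     \<ge> - (INF y\<in>U. rhoF F x y) - ereal \<eta>)"
proof -
  have F_pos: "\<And>x i. x \<in> K \<Longrightarrow> F x $ i > 0" using K F_pos_on_simplexM1[OF F_def f_pos] by blast
  have KM: "K \<subseteq> simplexM" using K by (auto simp: simplexM1_def)
  have F_cont_K: "continuous_on K F" by (rule continuous_on_subset[OF F_continuous[OF F_def f_cont] KM])
  obtain c r where c: "c \<in> simplexM" and r: "r > 0" and Ueq: "U = {y \<in> simplexM. dmax c y < r}"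
    using U unfolding is_open_ballM_def by blast
  have UM: "U \<subseteq> simplexM" and cU: "c \<in> U" using c r by (auto simp: Ueq dmax_self)
  define k where "k = real CARD('k)"
  obtain \<delta> where \<delta>: "\<delta> > 0" and modulus: "\<And>x y q. x \<in> K \<Longrightarrow> y \<in> simplexM \<Longrightarrow> q \<in> simplexM \<Longrightarrow>
      norm (q - y) < \<delta> \<Longrightarrow> \<bar>rel_entropy_real (F x) q - rel_entropy_real (F x) y\<bar> < \<eta>/4"
    using rel_entropy_real_uniform_modulus[OF K(1) F_cont_K F_pos, of "\<eta>/4"] eta by auto
  have half_\<eta>: "\<eta> / 2 > 0" using eta by simp
  have "eventually (\<lambda>N. \<forall>x\<in>K. ereal (1 / real N) * elog (mn_kernel F N x U)
                     \<ge> - (INF y\<in>U. rhoF F x y) - ereal \<eta>) sequentially"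
    using eventually_types_dense_in_ball[OF c r \<delta>] eventually_log_over_N_less[OF half_\<eta>, of "2 * k" k]
      eventually_gt_at_top[of 0]
  proof eventually_elim
    case (elim N)
    hence N: "N > 0" and N\<eta>: "k * (2 + ln (real N + 1)) / real N < \<eta> / 2"
      by (auto simp: distrib_left)
    have dense: "\<exists>n\<in>types N. type_point N n \<in> U \<and> norm (type_point N n - y) < \<delta>" if y: "y \<in> U" for y
    proof -
      obtain n where n: "n \<in> types N" "dmax c (type_point N n) < r" "norm (type_point N n - y) < \<delta>"
        using elim y unfolding Ueq by blast
      thus ?thesis using type_point_in_simplexM[OF n(1) N] unfolding Ueq by auto
    qed
    show ?case
    proof
      fix x assume x: "x \<in> K"
      have approx: "\<exists>n\<in>types N. type_point N n \<in> U
          \<and> rel_entropy_real (F x) (type_point N n) \<le> rel_entropy_real (F x) y + \<eta>/4" if y: "y \<in> U" for y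
      proof -
        obtain n where n: "n \<in> types N" "type_point N n \<in> U" and qy: "norm (type_point N n - y) < \<delta>"
          using dense[OF y] by blast
        hence "\<bar>rel_entropy_real (F x) (type_point N n) - rel_entropy_real (F x) y\<bar> < \<eta>/4"
          using modulus[OF x, of y "type_point N n"] y UM by auto
        hence "rel_entropy_real (F x) (type_point N n) \<le> rel_entropy_real (F x) y + \<eta>/4" by linarith
        thus ?thesis using n by blast
      qed
      have "- (INF y\<in>U. rel_entropy (F x) y) - ereal \<eta>
          \<le> - (INF y\<in>U. rel_entropy (F x) y) - ereal (\<eta>/4 + \<eta>/4 + k * (2 + ln (real N + 1)) / real N)"
        using N\<eta> by (intro ereal_minus_mono order_refl, subst ereal_less_eq(3)) linarith
      also have "\<dots> \<le> ereal (1 / real N) * elog (mn_kernel F N x U)"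
        unfolding mn_kernel_eq_mn_prob k_def using x KM eta
        by (intro mn_prob_lower_bound_INF[OF F_maps F_pos[OF x] N UM cU _ approx]) auto
      finally show "- (INF y\<in>U. rhoF F x y) - ereal \<eta> \<le> ereal (1 / real N) * elog (mn_kernel F N x U)"
        by (simp add: rhoF_rel_entropy)
    qed
  qed
  thus ?thesis by (rule eventually_imp_small_epsilon)
qed

lemma continuous_coords_bounded:
  fixes f :: "'a::topological_space \<Rightarrow> real^'k::finite"
  assumes "compact S" "continuous_on S f"
  shows "\<exists>B>0. \<forall>x\<in>S. \<forall>i. f x $ i \<le> B"
proof -
  have "compact (f ` S)" using assms by (rule compact_continuous_image[rotated])
  then obtain B where "B > 0" and "\<And>y. y \<in> f ` S \<Longrightarrow> norm y \<le> B"
    using compact_imp_bounded bounded_pos by metis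
  thus ?thesis using component_le_norm_cart by (metis image_eqI abs_le_D1 order_trans)
qed

lemma boundary_neighbourhood:
  assumes "\<delta> > 0"
  shows "open (\<Union>i. {x::real^'k::finite. x$i < \<delta>})" and "simplexM0 \<subseteq> (\<Union>i. {x::real^'k. x$i < \<delta>})"
proof -
  show "open (\<Union>i. {x::real^'k. x$i < \<delta>})" by (intro open_UN ballI open_Collect_less continuous_intros)
  show "simplexM0 \<subseteq> (\<Union>i. {x::real^'k. x$i < \<delta>})"
  proof
    fix x :: "real^'k" assume "x \<in> simplexM0"
    then obtain i where "x$i = 0" by (auto simp: simplexM0_def)
    thus "x \<in> (\<Union>i. {x::real^'k. x$i < \<delta>})" using assms by (intro UN_I[of i]) auto
  qed
qed

text \<open>Hypothesis (LD0).  Near M0 some coordinate x_i is below \<delta>, so F_i(x) <= \<delta> max f is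
  small, and the boundary bound applies uniformly on that neighbourhood.\<close>

lemma hyp_LD0_multinomial:
  fixes f :: "real^'k::finite \<Rightarrow> real^'k" and F :: "real^'k \<Rightarrow> real^'k"
  assumes F_def: "\<And>x. F x = (\<chi> i. x$i * f x $ i)"
    and f_pos: "\<And>x i. x \<in> simplexM \<Longrightarrow> f x $ i > 0"
    and f_cont: "continuous_on simplexM f"
    and F_maps: "\<And>x. x \<in> simplexM \<Longrightarrow> F x \<in> simplexM"
  shows "hyp_LD0 (mn_kernel F)"
  unfolding hyp_LD0_def
proof (intro allI impI)
  fix c :: real assume c: "c > 0"
  obtain B where B: "B > 0" and f_le: "\<And>x i. x \<in> simplexM \<Longrightarrow> f x $ i \<le> B"
    using continuous_coords_bounded[OF compact_simplexM f_cont] by blast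
  define k where "k = real CARD('k)"
  have k_pos: "k > 0" unfolding k_def by simp
  define \<delta> where "\<delta> = min (1 / (2 * k * B)) (c / (4 * k * B))"
  have \<delta>: "\<delta> > 0" "\<delta> * B * k < 1" "k * (\<delta> * B) \<le> c / 4"
    using B k_pos c by (auto simp: \<delta>_def min_def field_simps)
  define V0 where "V0 = (\<Union>i. {x::real^'k. x$i < \<delta>})"
  have quarter_c: "c / 4 > 0" using c by simp
  have "eventually (\<lambda>N. - ereal c
      \<le> (INF x\<in>V0 \<inter> simplexM. ereal (1 / real N) * elog (mn_kernel F N x simplexM0))) sequentially"
    using eventually_log_over_N_less[OF quarter_c, of "k * k" 0]
      eventually_log_over_N_less[OF quarter_c, of "2 * k" k] eventually_gt_at_top[of 0]
  proof eventually_elim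
    case (elim N)
    hence N: "N > 0" and Nk: "k * k / real N < c / 4" and Nlog: "k * (2 + ln (real N + 1)) / real N < c / 4"
      by (auto simp: distrib_left)
    show ?case
    proof (rule INF_greatest)
      fix x assume x: "x \<in> V0 \<inter> simplexM"
      then obtain i where xi: "x$i < \<delta>" and xM: "x \<in> simplexM" by (auto simp: V0_def)
      have "F x $ i \<le> \<delta> * B"
        using xi simplex_nonneg[OF xM, of i] f_le[OF xM, of i] f_pos[OF xM, of i]
        by (simp add: F_def mult_mono)
      hence "ereal (- k * (\<delta> * B + k / real N) - k * (2 + ln (real N + 1)) / real N)
          \<le> ereal (1 / real N) * elog (mn_kernel F N x simplexM0)"
        unfolding mn_kernel_eq_mn_prob k_def
        using \<delta>(2) by (intro mn_prob_boundary_lower_bound F_maps xM N) (simp_all add: k_def)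
      moreover have "- k * (\<delta> * B + k / real N) = - (k * (\<delta> * B)) - k * k / real N"
        by (simp add: algebra_simps)
      hence "- c \<le> - k * (\<delta> * B + k / real N) - k * (2 + ln (real N + 1)) / real N"
        using \<delta>(3) Nk Nlog c by linarith
      ultimately show "- ereal c \<le> ereal (1 / real N) * elog (mn_kernel F N x simplexM0)"
        by (metis ereal_less_eq(3) order_trans uminus_ereal.simps(1))
    qed
  qed
  hence "- ereal c \<le> liminf (\<lambda>N. INF x\<in>V0 \<inter> simplexM. ereal (1 / real N) * elog (mn_kernel F N x simplexM0))"
    by (rule Liminf_bounded)
  thus "\<exists>V0. open V0 \<and> simplexM0 \<subseteq> V0 \<and>
      - ereal c \<le> liminf (\<lambda>N. INF x\<in>V0 \<inter> simplexM. ereal (1 / real N) * elog (mn_kernel F N x simplexM0))"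
    using boundary_neighbourhood[OF \<delta>(1)] unfolding V0_def by blast
qed


lemma rhoF_separated:
  assumes F_maps: "\<And>x. x \<in> simplexM \<Longrightarrow> F x \<in> simplexM" and \<beta>: "\<beta> > 0"
  shows "Inf {rhoF F x y | x y. x \<in> simplexM \<and> y \<in> simplexM \<and> dmax (F x) y > \<beta>} > 0"
proof -
  have "ereal (\<beta>^2/2) \<le> Inf {rhoF F x y | x y. x \<in> simplexM \<and> y \<in> simplexM \<and> dmax (F x) y > \<beta>}"
    using rel_entropy_dmax_bound[OF F_maps _ _ \<beta>] by (intro Inf_greatest) (auto simp: rhoF_rel_entropy)
  moreover have "(0::ereal) < ereal (\<beta>^2/2)" using \<beta> by simp
  ultimately show ?thesis by (rule less_le_trans[rotated])
qed

lemma hyp_LD_multinomial: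
  fixes f :: "real^'k::finite \<Rightarrow> real^'k" and F :: "real^'k \<Rightarrow> real^'k"
  assumes F_def: "\<And>x. F x = (\<chi> i. x$i * f x $ i)"
    and f_pos: "\<And>x i. x \<in> simplexM \<Longrightarrow> f x $ i > 0"
    and f_cont: "continuous_on simplexM f"
    and F_maps: "\<And>x. x \<in> simplexM \<Longrightarrow> F x \<in> simplexM"
  shows "hyp_LD F (rhoF F) (mn_kernel F)"
  unfolding hyp_LD_def
proof (intro conjI ballI allI impI)
  fix x y :: "real^'k" assume x: "x \<in> simplexM" and y: "y \<in> simplexM"
  show "rhoF F x y \<ge> 0" unfolding rhoF_rel_entropy by (rule rel_entropy_nonneg[OF F_maps[OF x] y])
  show "rhoF F x y = 0 \<longleftrightarrow> y = F x"
    unfolding rhoF_rel_entropy by (rule rel_entropy_eq_0_iff[OF F_maps[OF x] y])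
next
  show "continuous_on (simplexM1 \<times> simplexM) (\<lambda>(x, y). rhoF F x y)"
    by (rule rhoF_continuous[OF F_def f_pos f_cont])
next
  fix \<beta> :: real assume "\<beta> > 0"
  thus "Inf {rhoF F x y | x y. x \<in> simplexM \<and> y \<in> simplexM \<and> dmax (F x) y > \<beta>} > 0"
    using rhoF_separated[OF F_maps] by simp
next
  fix K U :: "(real^'k) set" and \<eta> :: real
  assume "compact K \<and> K \<subseteq> simplexM1 \<and> is_open_ballM U \<and> \<eta> > 0"
  thus "\<exists>\<epsilon>0>0. \<forall>N. N > 0 \<and> 1 / real N < \<epsilon>0 \<longrightarrow>
         (\<forall>x\<in>K. - (INF y\<in>U. rhoF F x y) - ereal \<eta> \<le> ereal (1 / real N) * elog (mn_kernel F N x U))"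
    using LD_lower_bound[OF F_def f_pos f_cont F_maps] by blast
next
  fix C :: "(real^'k) set" and \<eta> :: real assume "closed C \<and> C \<subseteq> simplexM \<and> \<eta> > 0"
  thus "\<exists>\<epsilon>0>0. \<forall>N. N > 0 \<and> 1 / real N < \<epsilon>0 \<longrightarrow>
         (\<forall>x\<in>simplexM. ereal (1 / real N) * elog (mn_kernel F N x C) \<le> - (INF y\<in>C. rhoF F x y) + ereal \<eta>)"
    using LD_upper_bound[where F=F, OF F_maps] by blast
qed

theorem mainTheorem19:
  fixes f :: "real^'k::finite \<Rightarrow> real^'k"
    and F :: "real^'k \<Rightarrow> real^'k"
  assumes F_def: "\<And>x. F x = (\<chi> i. x$i * f x $ i)"
    and f_pos: "\<And>x i. x \<in> simplexM \<Longrightarrow> f x $ i > 0"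
    and f_cont: "continuous_on simplexM f"
    and F_maps: "\<And>x. x \<in> simplexM \<Longrightarrow> F x \<in> simplexM"
  shows "hyp_LD F (rhoF F) (mn_kernel F) \<and> hyp_LD0 (mn_kernel F)"
  using hyp_LD_multinomial[OF F_def f_pos f_cont F_maps] hyp_LD0_multinomial[OF F_def f_pos f_cont F_maps]
  by blast

end
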